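(* Let $G$ be a graph, $r\ge1$, $k\in\mathbb{N}$, and let $L_S$ be a subordering of $S\subseteq V(G)$ with free vertices $T=V(G)\setminus S$. Assume there is a full right extension $L'$ of $L_S$ with $\mathrm{wcol}_r(G,L')\le k$. If $u\in T$ satisfies $|\mathrm{Wreach}_r(G,L_S,u)|=k$, then there is a full right extension $\overline{L}$ of $L_S$ in which $u$ is the leftmost vertex of $T$ and $\mathrm{wcol}_r(G,\overline{L})\le k$.
   Context: All graphs are finite, undirected, without loops. A path has length equal to its number of vertices minus one. A subordering $L_S$ is a linear ordering of $S\subseteq V(G)$; $\preceq_{L_S}$ means precedes or equal. For a subordering $L_S$ and $u,v\in V(G)$, $u\in\mathrm{Wreach}_r(G,L_S,v)$ iff either $u=v$, or $u\in S$ and there is a path $P$ of length at most $r$ between $u$ and $v$ with $u\preceq_{L_S} w$ for all $w\in V(P)\cap S$; $\mathrm{wcol}_r(G,L_S)=\max_{v}|\mathrm{Wreach}_r(G,L_S,v)|$. A full right extension of $L_S$ is a linear ordering of $V(G)$ whose restriction to $S$ is $L_S$ and in which every vertex of $S$ precedes every vertex of $V(G)\setminus S$. *)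

theory Defs
  imports Main
begin

definition graph :: "'a set \<Rightarrow> ('a \<Rightarrow> 'a \<Rightarrow> bool) \<Rightarrow> bool" where
  "graph V E \<longleftrightarrow> finite V \<and> (\<forall>x y. E x y \<longrightarrow> x \<in> V \<and> y \<in> V) \<and>
     (\<forall>x y. E x y \<longrightarrow> E y x) \<and> (\<forall>x. \<not> E x x)"

text \<open>A path given as its list of vertices (nonempty, distinct, consecutive vertices adjacent).
  Its length is the number of vertices minus one.\<close>
definition is_path :: "'a set \<Rightarrow> ('a \<Rightarrow> 'a \<Rightarrow> bool) \<Rightarrow> 'a list \<Rightarrow> bool" where
  "is_path V E P \<longleftrightarrow> P \<noteq> [] \<and> distinct P \<and> set P \<subseteq> V \<and>
     (\<forall>i. Suc i < length P \<longrightarrow> E (P ! i) (P ! Suc i))"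

text \<open>A (sub)ordering L_S of S is a distinct list with set L_S = S; position gives the order.\<close>
definition subordering :: "'a set \<Rightarrow> 'a list \<Rightarrow> bool" where
  "subordering V L \<longleftrightarrow> distinct L \<and> set L \<subseteq> V"

definition prec_eq :: "'a list \<Rightarrow> 'a \<Rightarrow> 'a \<Rightarrow> bool" where
  "prec_eq L u w \<longleftrightarrow> (\<exists>i j. i \<le> j \<and> j < length L \<and> L ! i = u \<and> L ! j = w)"

definition Wreach :: "'a set \<Rightarrow> ('a \<Rightarrow> 'a \<Rightarrow> bool) \<Rightarrow> nat \<Rightarrow> 'a list \<Rightarrow> 'a \<Rightarrow> 'a set" where
  "Wreach V E r L v = {u \<in> V. u = v \<or>
     (u \<in> set L \<and> (\<exists>P. is_path V E P \<and> hd P = u \<and> last P = v \<and> length P - 1 \<le> r \<and>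
        (\<forall>w \<in> set P \<inter> set L. prec_eq L u w)))}"

definition wcol :: "'a set \<Rightarrow> ('a \<Rightarrow> 'a \<Rightarrow> bool) \<Rightarrow> nat \<Rightarrow> 'a list \<Rightarrow> nat" where
  "wcol V E r L = Max ((\<lambda>v. card (Wreach V E r L v)) ` V)"

text \<open>Full right extension: a linear ordering of all of V that starts with L_S
  (so its restriction to S is L_S and S precedes V - S).\<close>
definition full_right_ext :: "'a set \<Rightarrow> 'a list \<Rightarrow> 'a list \<Rightarrow> bool" where
  "full_right_ext V LS L \<longleftrightarrow> distinct L \<and> set L = V \<and> take (length LS) L = LS"

end

theory Submission
  imports Defs
begin

text \<open>
  Write \<open>L' = L\<^sub>S @ R\<close>. Every vertex weakly reaching \<open>u\<close> with respect to \<open>L\<^sub>S\<close>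
  still does so with respect to \<open>L'\<close>, and \<open>L'\<close> allows at most \<open>k\<close> of them; hence
  \<open>Wreach\<^sub>r(L', u) = Wreach\<^sub>r(L\<^sub>S, u) \<subseteq> L\<^sub>S \<union> {u}\<close>. Now move \<open>u\<close> to the front of \<open>R\<close>.
  Weak reachability of the other vertices is unaffected, and a short path from \<open>u\<close> whose
  vertices all follow \<open>u\<close> in the new order lies in \<open>R\<close>: its \<open>L'\<close>-least vertex \<open>x\<close> weakly
  reaches \<open>u\<close> in \<open>L'\<close> along the reversed initial segment, so \<open>x = u\<close>. Thus no weakly
  reachable set grows, and the new ordering still has weak colouring number at most \<open>k\<close>.
\<close>

lemma prec_eq_set: "prec_eq L a b \<Longrightarrow> a \<in> set L \<and> b \<in> set L"
  unfolding prec_eq_def by auto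

lemma prec_eq_append_iff:
  "prec_eq (xs @ ys) a b \<longleftrightarrow> prec_eq xs a b \<or> prec_eq ys a b \<or> (a \<in> set xs \<and> b \<in> set ys)"
proof
  assume "prec_eq (xs @ ys) a b"
  then obtain i j where ij: "i \<le> j" "j < length (xs @ ys)" "(xs @ ys) ! i = a" "(xs @ ys) ! j = b"
    unfolding prec_eq_def by blast
  consider "j < length xs" | "i < length xs" "length xs \<le> j" | "length xs \<le> i"
    using ij(1) by linarith
  then show "prec_eq xs a b \<or> prec_eq ys a b \<or> (a \<in> set xs \<and> b \<in> set ys)"
  proof cases
    case 1
    then have "prec_eq xs a b"
      unfolding prec_eq_def using ij by (intro exI[of _ i] exI[of _ j]) (simp add: nth_append)
    then show ?thesis by blast
  next
    case 2
    then have "a \<in> set xs" "b \<in> set ys"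
      using ij by (auto simp: nth_append)
    then show ?thesis by blast
  next
    case 3
    then have "prec_eq ys a b"
      unfolding prec_eq_def using ij
      by (intro exI[of _ "i - length xs"] exI[of _ "j - length xs"]) (auto simp: nth_append)
    then show ?thesis by blast
  qed
next
  assume "prec_eq xs a b \<or> prec_eq ys a b \<or> (a \<in> set xs \<and> b \<in> set ys)"
  then consider "prec_eq xs a b" | "prec_eq ys a b" | "a \<in> set xs" "b \<in> set ys"
    by blast
  then show "prec_eq (xs @ ys) a b"
  proof cases
    case 1
    then obtain i j where "i \<le> j" "j < length xs" "xs ! i = a" "xs ! j = b"
      unfolding prec_eq_def by blast
    then show ?thesis unfolding prec_eq_def
      by (intro exI[of _ i] exI[of _ j]) (simp add: nth_append)
  next
    case 2
    then obtain i j where "i \<le> j" "j < length ys" "ys ! i = a" "ys ! j = b"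
      unfolding prec_eq_def by blast
    then show ?thesis unfolding prec_eq_def
      by (intro exI[of _ "length xs + i"] exI[of _ "length xs + j"]) (simp add: nth_append)
  next
    case 3
    then obtain i j where "i < length xs" "xs ! i = a" "j < length ys" "ys ! j = b"
      by (auto simp: in_set_conv_nth)
    then show ?thesis unfolding prec_eq_def
      by (intro exI[of _ i] exI[of _ "length xs + j"]) (simp add: nth_append)
  qed
qed

lemma prec_eq_Cons_iff:
  "prec_eq (x # xs) a b \<longleftrightarrow> (a = x \<and> b \<in> set (x # xs)) \<or> prec_eq xs a b"
proof -
  have "prec_eq [x] a b \<longleftrightarrow> a = x \<and> b = x"
    unfolding prec_eq_def by auto
  then show ?thesis
    using prec_eq_append_iff[of "[x]" xs a b] prec_eq_set[of xs a b] by auto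
qed

lemma prec_eq_move_forward:
  assumes "w \<noteq> u" and "prec_eq (xs @ u # ys @ zs) w y"
  shows "prec_eq (xs @ ys @ u # zs) w y"
proof -
  have "prec_eq xs w y \<or> prec_eq (ys @ zs) w y \<or> (w \<in> set xs \<and> y \<in> set (u # ys @ zs))"
    using assms by (simp add: prec_eq_append_iff[of xs] prec_eq_Cons_iff)
  then show ?thesis
    by (auto simp: prec_eq_append_iff prec_eq_Cons_iff)
qed

lemma exists_least_prec_eq:
  "S \<subseteq> set L \<Longrightarrow> S \<noteq> {} \<Longrightarrow> \<exists>x\<in>S. \<forall>y\<in>S. prec_eq L x y"
proof (induction L)
  case (Cons a L)
  show ?case
  proof (cases "a \<in> S")
    case True
    then show ?thesis using Cons.prems by (auto simp: prec_eq_Cons_iff)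
  next
    case False
    then show ?thesis using Cons by (auto simp: prec_eq_Cons_iff)
  qed
qed simp

lemma is_path_take: "is_path V E P \<Longrightarrow> i < length P \<Longrightarrow> is_path V E (take (Suc i) P)"
  unfolding is_path_def by (auto dest: in_set_takeD)

lemma is_path_rev:
  assumes "is_path V E P" and "\<And>x y. E x y \<Longrightarrow> E y x"
  shows "is_path V E (rev P)"
  unfolding is_path_def
proof (intro conjI allI impI)
  fix i assume i: "Suc i < length (rev P)"
  let ?j = "length P - Suc (Suc i)"
  have "E (P ! ?j) (P ! Suc ?j)" and "Suc ?j = length P - Suc i"
    using assms(1) i unfolding is_path_def by auto
  then show "E (rev P ! i) (rev P ! Suc i)"
    using assms(2) i by (auto simp: rev_nth)
qed (use assms(1) in \<open>auto simp: is_path_def\<close>)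

lemma Wreach_subset_insert: "Wreach V E r L v \<subseteq> insert v (set L)"
  unfolding Wreach_def by auto

lemma finite_Wreach: "finite V \<Longrightarrow> finite (Wreach V E r L v)"
  unfolding Wreach_def by simp

lemma card_Wreach_le_wcol:
  "finite V \<Longrightarrow> v \<in> V \<Longrightarrow> card (Wreach V E r L v) \<le> wcol V E r L"
  unfolding wcol_def by auto

lemma wcol_mono:
  assumes "finite V" and "V \<noteq> {}" and "\<And>v. v \<in> V \<Longrightarrow> Wreach V E r L1 v \<subseteq> Wreach V E r L2 v"
  shows "wcol V E r L1 \<le> wcol V E r L2"
proof -
  have "card (Wreach V E r L1 v) \<le> wcol V E r L2" if "v \<in> V" for v
  proof -
    have "card (Wreach V E r L1 v) \<le> card (Wreach V E r L2 v)"
      using finite_Wreach[OF assms(1)] assms(3)[OF that] by (rule card_mono)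
    also have "\<dots> \<le> wcol V E r L2"
      using card_Wreach_le_wcol[OF assms(1) that] .
    finally show ?thesis .
  qed
  then show ?thesis
    unfolding wcol_def[of V E r L1] using assms(1,2) by auto
qed

lemma Wreach_subset_append: "Wreach V E r L v \<subseteq> Wreach V E r (L @ R) v"
proof
  fix w assume "w \<in> Wreach V E r L v"
  then show "w \<in> Wreach V E r (L @ R) v"
    unfolding Wreach_def by (fastforce simp: prec_eq_append_iff dest: prec_eq_set)
qed

lemma least_of_path_in_Wreach:
  assumes sym: "\<And>x y. E x y \<Longrightarrow> E y x"
    and P: "is_path V E P" "hd P = u" "length P - 1 \<le> r"
    and x: "x \<in> set P" "x \<in> set L" "\<forall>y \<in> set P \<inter> set L. prec_eq L x y"
  shows "x \<in> Wreach V E r L u"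
proof -
  obtain i where i: "i < length P" "P ! i = x"
    using x(1) by (auto simp: in_set_conv_nth)
  define Q where "Q = rev (take (Suc i) P)"
  have "is_path V E Q"
    unfolding Q_def using is_path_rev[OF is_path_take[OF P(1) i(1)] sym] .
  moreover have "hd Q = x" "last Q = u" "length Q - 1 \<le> r"
    unfolding Q_def using i P by (auto simp: hd_rev last_rev take_Suc_conv_app_nth hd_conv_nth)
  moreover have "\<forall>y \<in> set Q \<inter> set L. prec_eq L x y"
    using x(3) unfolding Q_def by (auto dest: in_set_takeD)
  moreover have "x \<in> V"
    using P(1) x(1) unfolding is_path_def by auto
  ultimately show ?thesis
    unfolding Wreach_def using x(2) by blast
qed

lemma start_leftmost_on_short_path:
  assumes sym: "\<And>x y. E x y \<Longrightarrow> E y x"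
    and dist: "distinct (LS @ R)"
    and reach: "Wreach V E r (LS @ R) u \<subseteq> insert u (set LS)"
    and P: "is_path V E P" "hd P = u" "length P - 1 \<le> r" "set P \<subseteq> set R"
  shows "\<forall>y \<in> set P. prec_eq R u y"
proof -
  obtain x where x: "x \<in> set P" "\<forall>y \<in> set P. prec_eq R x y"
    using exists_least_prec_eq[OF P(4)] P(1) unfolding is_path_def by auto
  have "x \<in> Wreach V E r (LS @ R) u"
    using least_of_path_in_Wreach[OF sym P(1-3) x(1)] x P(4)
    by (auto simp: prec_eq_append_iff)
  then have "x = u"
    using reach x(1) P(4) dist by auto
  then show ?thesis
    using x(2) by simp
qed

lemma Wreach_move_forward_subset:
  assumes sym: "\<And>x y. E x y \<Longrightarrow> E y x"
    and dist: "distinct (LS @ R1 @ u # R2)"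
    and V: "set (LS @ R1 @ u # R2) = V"
    and reach: "Wreach V E r (LS @ R1 @ u # R2) u \<subseteq> insert u (set LS)"
  shows "Wreach V E r (LS @ u # R1 @ R2) v \<subseteq> Wreach V E r (LS @ R1 @ u # R2) v"
proof
  fix w assume w: "w \<in> Wreach V E r (LS @ u # R1 @ R2) v"
  show "w \<in> Wreach V E r (LS @ R1 @ u # R2) v"
  proof (cases "w = v")
    case True
    then show ?thesis using w unfolding Wreach_def by auto
  next
    case False
    then obtain P where P: "is_path V E P" "hd P = w" "last P = v" "length P - 1 \<le> r"
      and prec: "\<forall>y \<in> set P. prec_eq (LS @ u # R1 @ R2) w y"
      and wV: "w \<in> V"
      using w V unfolding Wreach_def is_path_def by auto
    have "prec_eq (LS @ R1 @ u # R2) w y" if y: "y \<in> set P" for y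
    proof (cases "w = u")
      case True
      have "u \<notin> set LS"
        using dist by auto
      then have "prec_eq (u # R1 @ R2) u z" if "z \<in> set P" for z
        using prec that True by (auto simp: prec_eq_append_iff dest: prec_eq_set)
      then have "set P \<subseteq> set (R1 @ u # R2)"
        using prec_eq_set by fastforce
      then have "\<forall>y \<in> set P. prec_eq (R1 @ u # R2) u y"
        using start_leftmost_on_short_path[OF sym dist reach P(1)] P(2,4) True by auto
      then show ?thesis
        using y True by (auto simp: prec_eq_append_iff)
    next
      case False
      then show ?thesis
        using prec y prec_eq_move_forward[of w u LS R1 R2 y] by auto
    qed
    then show ?thesis
      using P wV V unfolding Wreach_def by auto
  qed
qed

theorem proposition8:
  fixes V :: "'a set" and E :: "'a \<Rightarrow> 'a \<Rightarrow> bool" and r k :: nat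
    and LS L' :: "'a list" and u :: 'a
  assumes "graph V E"
    and "r \<ge> 1"
    and "subordering V LS"
    and "full_right_ext V LS L'" and "wcol V E r L' \<le> k"
    and "u \<in> V - set LS"
    and "card (Wreach V E r LS u) = k"
  shows "\<exists>Lbar. full_right_ext V LS Lbar \<and> Lbar ! length LS = u \<and> wcol V E r Lbar \<le> k"
proof -
  have fin: "finite V" and sym: "\<And>x y. E x y \<Longrightarrow> E y x"
    using assms(1) unfolding graph_def by auto
  obtain R where L': "L' = LS @ R"
    using assms(4) unfolding full_right_ext_def by (metis append_take_drop_id)
  then have "u \<in> set R"
    using assms(4,6) unfolding full_right_ext_def by auto
  then obtain R1 R2 where R: "R = R1 @ u # R2"
    by (meson split_list)
  have dist: "distinct (LS @ R1 @ u # R2)" and V: "set (LS @ R1 @ u # R2) = V"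
    using assms(4) L' R unfolding full_right_ext_def by auto
  have "card (Wreach V E r L' u) \<le> k"
    using card_Wreach_le_wcol[OF fin, of u E r L'] assms(5,6) by simp
  then have "Wreach V E r LS u = Wreach V E r L' u"
    using card_seteq[OF finite_Wreach[OF fin] Wreach_subset_append] assms(7) L' by simp
  then have reach: "Wreach V E r (LS @ R1 @ u # R2) u \<subseteq> insert u (set LS)"
    using Wreach_subset_insert L' R by metis
  have "wcol V E r (LS @ u # R1 @ R2) \<le> wcol V E r L'"
    unfolding L' R
    using wcol_mono[OF fin _ Wreach_move_forward_subset[OF sym dist V reach]] assms(6) by blast
  moreover have "full_right_ext V LS (LS @ u # R1 @ R2)"
    using dist V unfolding full_right_ext_def by auto
  ultimately show ?thesis
    using assms(5) by (intro exI[of _ "LS @ u # R1 @ R2"]) auto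
qed

end
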